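(* Consider $\texttt{CCI}_{n,\mu}(T,C,I,J)$ with $\mathcal{S},\mathcal{C}^{\text{out}},\mathcal{C}^{\text{in}}\subseteq\mathbb{N}$, and assume $\mathbb{E}[T^{1+\varepsilon}]<\infty$ for some $\varepsilon>0$, $\inf_i\{\lambda_i:\lambda_i>0\}>0$ and $\inf_j\{\varrho_j:\varrho_j>0\}>0$. Let $t,s\in\mathcal{S}$ be two vertex types of which at least one is not stable at tolerance $\tau\in(0,1)$, and for $a\in[\lfloor\mu n\rfloor]$ let $\mathcal{A}^{(a)}_{ts}$ be the event that arc $a$ is placed from a vertex of type $t$ to a vertex of type $s$. Then there exists a constant $\widehat{C}>0$ such that for any fixed $r>0$, $$\mathbb{P}(\mathcal{A}^{(a)}_{ts})\le\widehat{C}\sqrt{q_tq_s}\Big(\sqrt{q_tq_s}+\frac{\log(n)}{\sqrt n}+\frac1{n^r}\Big).$$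
   Context: Inputs: type distribution $T$ on $\mathcal{S}$, $q_k=\mathbb{P}(T=k)$; colour distribution $C=(C^{\text{out}},C^{\text{in}})$; indicators $I:\mathcal{S}\times\mathcal{C}^{\text{out}}\to\{0,1\}$, $J:\mathcal{S}\times\mathcal{C}^{\text{in}}\to\{0,1\}$; $\mu>0$; $\lambda_i=\sum_kq_kI(k,i)$, $\varrho_j=\sum_kq_kJ(k,j)$. $\texttt{CCI}_{n,\mu}(T,C,I,J)$: vertex set $[n]$, i.i.d. types $T_v\sim T$; for each $a\in[\lfloor\mu n\rfloor]$ an independent colour $C_a\sim C$; choose $v$ uniformly from $\{v:I(T_v,C^{\text{out}}_a)=1\}$ and independently $w$ uniformly from $\{w:J(T_w,C^{\text{in}}_a)=1\}$, and add arc $a=(v,w)$. Stability: $u_n^\uparrow(\tau)=\inf\{t:q_s<n^{-1+\tau}\ \forall s\ge t\}$; type $t$ is stable at tolerance $\tau$ if $t<u_n^\uparrow(\tau)$. *)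

theory Defs
  imports "HOL-Probability.Probability"
begin

text \<open>Vertices are 0,...,n-1 (standing for [n]); arcs are indexed 0,...,floor(mu n)-1.\<close>

definition q :: "nat pmf \<Rightarrow> nat \<Rightarrow> real" where
  "q T k = pmf T k"

definition lam :: "nat pmf \<Rightarrow> (nat \<Rightarrow> nat \<Rightarrow> bool) \<Rightarrow> nat \<Rightarrow> real" where
  "lam T I i = (\<Sum>k. q T k * (if I k i then 1 else 0))"

definition rho :: "nat pmf \<Rightarrow> (nat \<Rightarrow> nat \<Rightarrow> bool) \<Rightarrow> nat \<Rightarrow> real" where
  "rho T J j = (\<Sum>k. q T k * (if J k j then 1 else 0))"

definition num_arcs :: "nat \<Rightarrow> real \<Rightarrow> nat" where
  "num_arcs n \<mu> = nat \<lfloor>\<mu> * real n\<rfloor>"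

text \<open>Placement of a single arc given the vertex types and its colour c = (c_out, c_in).
  Convention: if no vertex is eligible as tail or as head, the arc is not placed (None).\<close>
definition arc_pmf :: "nat \<Rightarrow> (nat \<Rightarrow> nat) \<Rightarrow> (nat \<Rightarrow> nat \<Rightarrow> bool) \<Rightarrow> (nat \<Rightarrow> nat \<Rightarrow> bool)
    \<Rightarrow> nat \<times> nat \<Rightarrow> (nat \<times> nat) option pmf" where
  "arc_pmf n tys I J c =
     (let V = {v. v < n \<and> I (tys v) (fst c)}; W = {w. w < n \<and> J (tys w) (snd c)}
      in if V = {} \<or> W = {} then return_pmf None
         else map_pmf Some (pair_pmf (pmf_of_set V) (pmf_of_set W)))"

definition CCI :: "nat \<Rightarrow> real \<Rightarrow> nat pmf \<Rightarrow> (nat \<times> nat) pmf \<Rightarrow> (nat \<Rightarrow> nat \<Rightarrow> bool)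
    \<Rightarrow> (nat \<Rightarrow> nat \<Rightarrow> bool) \<Rightarrow> ((nat \<Rightarrow> nat) \<times> (nat \<Rightarrow> (nat \<times> nat) option)) pmf" where
  "CCI n \<mu> T C I J =
     do {
       tys \<leftarrow> Pi_pmf {..<n} 0 (\<lambda>_. T);
       cols \<leftarrow> Pi_pmf {..<num_arcs n \<mu>} (0, 0) (\<lambda>_. C);
       arcs \<leftarrow> Pi_pmf {..<num_arcs n \<mu>} None (\<lambda>a. arc_pmf n tys I J (cols a));
       return_pmf (tys, arcs)
     }"

definition arc_event :: "nat \<Rightarrow> nat \<Rightarrow> nat
    \<Rightarrow> ((nat \<Rightarrow> nat) \<times> (nat \<Rightarrow> (nat \<times> nat) option)) set" where
  "arc_event a t s = {(tys, arcs). \<exists>v w. arcs a = Some (v, w) \<and> tys v = t \<and> tys w = s}"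

definition u_up :: "nat pmf \<Rightarrow> nat \<Rightarrow> real \<Rightarrow> nat" where
  "u_up T n \<tau> = Inf {t. \<forall>s\<ge>t. q T s < real n powr (-1 + \<tau>)}"

definition stable :: "nat pmf \<Rightarrow> nat \<Rightarrow> real \<Rightarrow> nat \<Rightarrow> bool" where
  "stable T n \<tau> t \<longleftrightarrow> t < u_up T n \<tau>"

end

(* Conditionally on the vertex types, arc a runs from type t to type s with probability
   (N_t / N) (M_s / M), where N and M count the vertices eligible as tail and as head for the
   colour of a, and N_t, M_s those among them of type t and s. Writing N_t M_s as a sum over
   pairs of vertices (v, w) and pinning the types of v and w, an event of probability q_t q_s
   (or q_t on the diagonal v = w, t = s), the remaining vertices stay independent, so N and M
   dominate 1 + X and 1 + Y with X, Y binomial on at least n - 2 trials with success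
   probability at least delta. For X ~ Bin(m, p) the index shift k -> k + 2 into Bin(m + 2, p)
   gives E[1/((X+1)(X+2))] <= 1/((m+1)(m+2)p^2), which bounds the probability of the event by
   (4/delta^2)(q_t q_s + [t = s] q_t/(n - 1)), uniformly in the types; this is below the
   claimed bound as soon as n >= 3. *)
theory Submission
  imports Defs
begin

lemma Suc_Suc_times_binomial_eq:
  "(m + 1) * (m + 2) * (m choose k) = ((m + 2) choose (k + 2)) * ((k + 1) * (k + 2))"
  using Suc_times_binomial_eq[of m k] Suc_times_binomial_eq[of "Suc m" "Suc k"]
  by (simp add: algebra_simps)

lemma pmf_binomial_div_rising:
  fixes p :: real
  assumes "0 < p" "p \<le> 1"
  shows "pmf (binomial_pmf m p) k / ((k + 1) * (k + 2))
           = pmf (binomial_pmf (m + 2) p) (k + 2) / ((m + 1) * (m + 2) * p\<^sup>2)"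
proof -
  have choose: "real (m choose k) * ((real m + 1) * (real m + 2))
                  = real ((m + 2) choose (k + 2)) * ((real k + 1) * (real k + 2))"
    using arg_cong[OF Suc_Suc_times_binomial_eq[of m k], of real]
    by (simp del: binomial_Suc_Suc add: algebra_simps)
  have pmf_m: "pmf (binomial_pmf m p) k = real (m choose k) * (p ^ k * (1 - p) ^ (m - k))"
    using assms by simp
  have pmf_m2: "pmf (binomial_pmf (m + 2) p) (k + 2)
                  = real ((m + 2) choose (k + 2)) * (p ^ k * (1 - p) ^ (m - k) * p\<^sup>2)"
    using assms by (simp del: binomial_Suc_Suc add: power_add power2_eq_square mult_ac)
  have cancel: "x * M = y * K \<Longrightarrow> K \<noteq> 0 \<Longrightarrow> M \<noteq> 0 \<Longrightarrow> P \<noteq> 0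
                  \<Longrightarrow> x * a / K = y * (a * P) / (M * P)" for x y a M K P :: real
    by (simp add: field_simps)
  show ?thesis
    unfolding pmf_m pmf_m2 by (rule cancel[OF choose]) (use assms in auto)
qed

lemma sum_pmf_binomial_div_rising_le:
  fixes p :: real
  assumes p: "0 < p" "p \<le> 1"
  shows "(\<Sum>k\<le>m. pmf (binomial_pmf m p) k / ((real k + 1) * (real k + 2)))
           \<le> 1 / ((real m + 1) * (real m + 2) * p\<^sup>2)"
proof -
  have "(\<Sum>k\<le>m. pmf (binomial_pmf (m + 2) p) (k + 2))
          = (\<Sum>j\<in>(\<lambda>k. k + 2) ` {..m}. pmf (binomial_pmf (m + 2) p) j)"
    by (subst sum.reindex) (auto simp: inj_on_def)
  also have "\<dots> \<le> (\<Sum>j\<le>m + 2. pmf (binomial_pmf (m + 2) p) j)"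
    by (intro sum_mono2) auto
  also have "\<dots> = 1"
    using p by (intro sum_pmf_eq_1) (auto simp: set_pmf_binomial_eq)
  finally have "(\<Sum>k\<le>m. pmf (binomial_pmf (m + 2) p) (k + 2)) \<le> 1" .
  moreover have "(\<Sum>k\<le>m. pmf (binomial_pmf m p) k / ((real k + 1) * (real k + 2)))
                   = (\<Sum>k\<le>m. pmf (binomial_pmf (m + 2) p) (k + 2)) / ((real m + 1) * (real m + 2) * p\<^sup>2)"
    using p by (simp add: pmf_binomial_div_rising sum_divide_distrib del: pmf_binomial)
  ultimately show ?thesis
    using p by (simp add: divide_right_mono)
qed

lemma nn_integral_binomial_inverse_square:
  fixes p :: real
  assumes p: "0 < p" "p \<le> 1"
  shows "(\<integral>\<^sup>+k. ennreal (1 / (1 + real k)\<^sup>2) \<partial>binomial_pmf m p)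
           \<le> ennreal (2 / ((real m + 1) * (real m + 2) * p\<^sup>2))"
proof -
  have "set_pmf (binomial_pmf m p) \<subseteq> {..m}"
    using p by (auto simp: set_pmf_binomial_eq)
  then have "(\<integral>\<^sup>+k. ennreal (1 / (1 + real k)\<^sup>2) \<partial>binomial_pmf m p)
               = (\<Sum>k\<le>m. ennreal (1 / (1 + real k)\<^sup>2) * ennreal (pmf (binomial_pmf m p) k))"
    by (intro nn_integral_measure_pmf_support) auto
  also have "\<dots> = ennreal (\<Sum>k\<le>m. pmf (binomial_pmf m p) k * (1 / (1 + real k)\<^sup>2))"
    by (simp add: ennreal_mult''[symmetric] mult.commute del: pmf_binomial)
  also have "\<dots> \<le> ennreal (\<Sum>k\<le>m. 2 * (pmf (binomial_pmf m p) k / ((real k + 1) * (real k + 2))))"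
  proof (intro ennreal_leI sum_mono)
    fix k
    have "(real k + 1) * (real k + 2) \<le> 2 * (1 + real k)\<^sup>2"
      by (simp add: power2_eq_square algebra_simps)
    then have "1 / (1 + real k)\<^sup>2 \<le> 2 / ((real k + 1) * (real k + 2))"
      by (simp add: divide_simps add_pos_pos)
    from mult_left_mono[OF this pmf_nonneg]
    show "pmf (binomial_pmf m p) k * (1 / (1 + real k)\<^sup>2)
            \<le> 2 * (pmf (binomial_pmf m p) k / ((real k + 1) * (real k + 2)))"
      by (simp add: mult.commute)
  qed
  also have "\<dots> = ennreal (2 * (\<Sum>k\<le>m. pmf (binomial_pmf m p) k / ((real k + 1) * (real k + 2))))"
    by (simp only: sum_distrib_left)
  also have "\<dots> \<le> ennreal (2 / ((real m + 1) * (real m + 2) * p\<^sup>2))"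
    using mult_left_mono[OF sum_pmf_binomial_div_rising_le[OF p, of m], of 2]
    by (intro ennreal_leI) simp
  finally show ?thesis .
qed

lemma map_pmf_eq_bernoulli_pmf: "map_pmf P T = bernoulli_pmf (measure_pmf.prob T {k. P k})"
proof (rule pmf_eqI)
  fix b :: bool
  have "measure_pmf.prob T {k. \<not> P k} = 1 - measure_pmf.prob T {k. P k}"
    using measure_pmf.prob_compl[of "{k. P k}" T] by (simp add: Compl_eq_Diff_UNIV[symmetric] Collect_neg_eq)
  then show "pmf (map_pmf P T) b = pmf (bernoulli_pmf (measure_pmf.prob T {k. P k})) b"
    by (cases b) (auto simp: pmf_map vimage_def)
qed

lemma map_pmf_card_Pi_pmf:
  assumes "finite R"
  shows "map_pmf (\<lambda>g. card {u \<in> R. P (g u)}) (Pi_pmf R d (\<lambda>_. T))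
           = binomial_pmf (card R) (measure_pmf.prob T {k. P k})"
proof -
  have "binomial_pmf (card R) (measure_pmf.prob T {k. P k})
          = map_pmf (\<lambda>f. card {u \<in> R. f u}) (Pi_pmf R (P d) (\<lambda>_. map_pmf P T))"
    using assms by (simp add: binomial_pmf_altdef' map_pmf_eq_bernoulli_pmf)
  also have "Pi_pmf R (P d) (\<lambda>_. map_pmf P T) = map_pmf (\<lambda>g. P \<circ> g) (Pi_pmf R d (\<lambda>_. T))"
    using assms by (rule Pi_pmf_map) simp
  finally show ?thesis
    by (simp add: pmf.map_comp o_def)
qed

lemma nn_integral_inverse_square_count:
  assumes "finite R" "0 < \<delta>" "\<delta> \<le> measure_pmf.prob T {k. P k}"
  shows "(\<integral>\<^sup>+g. ennreal (1 / (1 + real (card {u \<in> R. P (g u)}))\<^sup>2) \<partial>Pi_pmf R d (\<lambda>_. T))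
           \<le> ennreal (2 / ((real (card R) + 1) * (real (card R) + 2) * \<delta>\<^sup>2))"
proof -
  let ?p = "measure_pmf.prob T {k. P k}"
  have "(\<integral>\<^sup>+g. ennreal (1 / (1 + real (card {u \<in> R. P (g u)}))\<^sup>2) \<partial>Pi_pmf R d (\<lambda>_. T))
          = (\<integral>\<^sup>+k. ennreal (1 / (1 + real k)\<^sup>2) \<partial>map_pmf (\<lambda>g. card {u \<in> R. P (g u)}) (Pi_pmf R d (\<lambda>_. T)))"
    by simp
  also have "\<dots> = (\<integral>\<^sup>+k. ennreal (1 / (1 + real k)\<^sup>2) \<partial>binomial_pmf (card R) ?p)"
    by (simp only: map_pmf_card_Pi_pmf[OF assms(1)])
  also have "\<dots> \<le> ennreal (2 / ((real (card R) + 1) * (real (card R) + 2) * ?p\<^sup>2))"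
    using assms by (intro nn_integral_binomial_inverse_square) auto
  also have "\<dots> \<le> ennreal (2 / ((real (card R) + 1) * (real (card R) + 2) * \<delta>\<^sup>2))"
    using assms by (intro ennreal_leI divide_left_mono mult_left_mono power_mono mult_pos_pos) auto
  finally show ?thesis .
qed

lemma inverse_mult_le_inverse_squares:
  fixes x y :: real
  assumes "0 \<le> x" "0 \<le> y"
  shows "1 / ((1 + x) * (1 + y)) \<le> 1 / (1 + x)\<^sup>2 + 1 / (1 + y)\<^sup>2"
proof -
  have "1 / ((1 + x) * (1 + y)) \<le> 1 / (min (1 + x) (1 + y))\<^sup>2"
    using assms by (intro divide_left_mono) (auto simp: power2_eq_square min_def intro: mult_mono)
  also have "\<dots> \<le> 1 / (1 + x)\<^sup>2 + 1 / (1 + y)\<^sup>2"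
    by (auto simp: min_def)
  finally show ?thesis .
qed

lemma nn_integral_inverse_counts:
  assumes R: "finite R" and \<delta>: "0 < \<delta>" "\<delta> \<le> measure_pmf.prob T {k. P k}" "\<delta> \<le> measure_pmf.prob T {k. Q k}"
  shows "(\<integral>\<^sup>+g. ennreal (1 / ((1 + real (card {u \<in> R. P (g u)})) * (1 + real (card {u \<in> R. Q (g u)}))))
            \<partial>Pi_pmf R d (\<lambda>_. T))
         \<le> ennreal (4 / ((real (card R) + 1) * (real (card R) + 2) * \<delta>\<^sup>2))"
proof -
  let ?M = "Pi_pmf R d (\<lambda>_. T)" and ?B = "2 / ((real (card R) + 1) * (real (card R) + 2) * \<delta>\<^sup>2)"
  have "(\<integral>\<^sup>+g. ennreal (1 / ((1 + real (card {u \<in> R. P (g u)})) * (1 + real (card {u \<in> R. Q (g u)})))) \<partial>?M)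
          \<le> (\<integral>\<^sup>+g. ennreal (1 / (1 + real (card {u \<in> R. P (g u)}))\<^sup>2)
                 + ennreal (1 / (1 + real (card {u \<in> R. Q (g u)}))\<^sup>2) \<partial>?M)"
    by (intro nn_integral_mono) (simp flip: ennreal_plus add: ennreal_leI inverse_mult_le_inverse_squares)
  also have "\<dots> = (\<integral>\<^sup>+g. ennreal (1 / (1 + real (card {u \<in> R. P (g u)}))\<^sup>2) \<partial>?M)
                   + (\<integral>\<^sup>+g. ennreal (1 / (1 + real (card {u \<in> R. Q (g u)}))\<^sup>2) \<partial>?M)"
    by (rule nn_integral_add) auto
  also have "\<dots> \<le> ennreal ?B + ennreal ?B"
    using R \<delta> by (intro add_mono nn_integral_inverse_square_count) auto
  also have "\<dots> = ennreal (4 / ((real (card R) + 1) * (real (card R) + 2) * \<delta>\<^sup>2))"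
    using \<delta> by (simp flip: ennreal_plus)
  finally show ?thesis .
qed

lemma nn_integral_Pi_pmf_mult_indep:
  assumes A: "finite A" "D \<subseteq> A"
    and F: "\<And>f g. (\<forall>x\<in>D. f x = g x) \<Longrightarrow> F f = F g"
    and G: "\<And>f g. (\<forall>x\<in>A - D. f x = g x) \<Longrightarrow> G f = G g"
  shows "(\<integral>\<^sup>+f. F f * G f \<partial>Pi_pmf A d p)
           = (\<integral>\<^sup>+f. F f \<partial>Pi_pmf D d p) * (\<integral>\<^sup>+g. G g \<partial>Pi_pmf (A - D) d p)"
proof -
  let ?merge = "\<lambda>(f, g) x. if x \<in> D then f x else g x"
  have "Pi_pmf A d p = Pi_pmf (D \<union> (A - D)) d p"
    using A by (simp add: Un_absorb1)
  also have "\<dots> = map_pmf ?merge (pair_pmf (Pi_pmf D d p) (Pi_pmf (A - D) d p))"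
    using A by (intro Pi_pmf_union) (auto intro: finite_subset)
  finally have "(\<integral>\<^sup>+f. F f * G f \<partial>Pi_pmf A d p)
                  = (\<integral>\<^sup>+f. \<integral>\<^sup>+g. F (?merge (f, g)) * G (?merge (f, g)) \<partial>Pi_pmf (A - D) d p \<partial>Pi_pmf D d p)"
    by (simp add: nn_integral_pair_pmf')
  also have "\<dots> = (\<integral>\<^sup>+f. \<integral>\<^sup>+g. F f * G g \<partial>Pi_pmf (A - D) d p \<partial>Pi_pmf D d p)"
    by (intro nn_integral_cong arg_cong2[where f = "(*)"] F G) auto
  also have "\<dots> = (\<integral>\<^sup>+f. F f \<partial>Pi_pmf D d p) * (\<integral>\<^sup>+g. G g \<partial>Pi_pmf (A - D) d p)"
    by (simp add: nn_integral_cmult nn_integral_multc)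
  finally show ?thesis .
qed

lemma prob_Pi_pmf_two_coordinates:
  assumes "finite A" "v \<in> A" "w \<in> A"
  shows "measure_pmf.prob (Pi_pmf A d (\<lambda>_. T)) {f. f v = t \<and> f w = s}
           = (if v = w then (if t = s then pmf T t else 0) else pmf T t * pmf T s)"
proof (cases "v = w")
  case True
  have "measure_pmf.prob (Pi_pmf A d (\<lambda>_. T)) {f. f v = t}
          = measure_pmf.prob (map_pmf (\<lambda>f. f v) (Pi_pmf A d (\<lambda>_. T))) {t}"
    by (simp add: vimage_def)
  also have "\<dots> = pmf T t"
    using assms by (simp add: Pi_pmf_component measure_pmf_single)
  finally have marginal: "measure_pmf.prob (Pi_pmf A d (\<lambda>_. T)) {f. f v = t} = pmf T t" .
  show ?thesis
  proof (cases "t = s")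
    case False
    then have "{f. f v = t \<and> f w = s} = {}"
      using \<open>v = w\<close> by auto
    then have "measure_pmf.prob (Pi_pmf A d (\<lambda>_. T)) {f. f v = t \<and> f w = s} = 0"
      by (metis measure_empty)
    with False True show ?thesis
      by simp
  qed (use True marginal in simp)
next
  case False
  define B where "B x = (if x = v then {t} else if x = w then {s} else UNIV)" for x
  have "{f. f v = t \<and> f w = s} = Pi A B"
    using assms False by (auto simp: B_def Pi_def)
  moreover have "(\<Prod>x\<in>A. measure_pmf.prob T (B x))
                   = (\<Prod>x\<in>A. (if x = v then pmf T t else 1) * (if x = w then pmf T s else 1))"
    using False by (intro prod.cong) (auto simp: B_def measure_pmf_single)
  moreover have "\<dots> = pmf T t * pmf T s"
    using assms by (simp add: prod.distrib)
  ultimately show ?thesis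
    using assms False by (simp add: measure_Pi_pmf_Pi)
qed

(* If no vertex is eligible the fraction is 0 / 0 = 0, matching the convention of arc_pmf
   that such an arc is not placed. *)
definition type_fraction :: "'a set \<Rightarrow> ('a \<Rightarrow> 'b) \<Rightarrow> ('b \<Rightarrow> bool) \<Rightarrow> 'b \<Rightarrow> real" where
  "type_fraction A tys P t = card {v \<in> A. P (tys v) \<and> tys v = t} / card {v \<in> A. P (tys v)}"

lemma type_fraction_product_le:
  assumes A: "finite A" and "P t" "Q s"
  shows "type_fraction A f P t * type_fraction A f Q s
           \<le> (\<Sum>v\<in>A. \<Sum>w\<in>A. indicator {f. f v = t \<and> f w = s} f *
                 (1 / ((1 + real (card {u \<in> A - {v, w}. P (f u)})) * (1 + real (card {u \<in> A - {v, w}. Q (f u)})))))"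
proof -
  let ?cP = "real (card {u \<in> A. P (f u)})" and ?cQ = "real (card {u \<in> A. Q (f u)})"
  have count: "1 + real (card {u \<in> A - D. R (f u)}) \<le> real (card {u \<in> A. R (f u)})"
    if "v \<in> A" "v \<in> D" "R (f v)" for v D R
  proof -
    have "card {u \<in> A - D. R (f u)} \<le> card ({u \<in> A. R (f u)} - {v})"
      using A that by (intro card_mono) auto
    also have "\<dots> < card {u \<in> A. R (f u)}"
      using A that by (intro card_Diff1_less) auto
    finally show ?thesis
      by linarith
  qed
  have "{v \<in> A. P (f v) \<and> f v = t} = {v \<in> A. f v = t}" "{v \<in> A. Q (f v) \<and> f v = s} = {v \<in> A. f v = s}"
    using assms by auto
  then have "type_fraction A f P t * type_fraction A f Q s
               = (\<Sum>v\<in>A. of_bool (f v = t)) * (\<Sum>w\<in>A. of_bool (f w = s)) / (?cP * ?cQ)"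
    using A by (simp add: type_fraction_def Int_def)
  also have "\<dots> = (\<Sum>v\<in>A. \<Sum>w\<in>A. of_bool (f v = t) * of_bool (f w = s) / (?cP * ?cQ))"
    by (simp only: sum_product sum_divide_distrib)
  also have "\<dots> = (\<Sum>v\<in>A. \<Sum>w\<in>A. indicator {f. f v = t \<and> f w = s} f / (?cP * ?cQ))"
    by (intro sum.cong refl) (simp add: indicator_def)
  also have "\<dots> \<le> (\<Sum>v\<in>A. \<Sum>w\<in>A. indicator {f. f v = t \<and> f w = s} f *
                 (1 / ((1 + real (card {u \<in> A - {v, w}. P (f u)})) * (1 + real (card {u \<in> A - {v, w}. Q (f u)})))))"
  proof (intro sum_mono)
    fix v w assume "v \<in> A" "w \<in> A"
    then have "f v = t \<Longrightarrow> f w = s \<Longrightarrow> 1 / (?cP * ?cQ)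
                 \<le> 1 / ((1 + real (card {u \<in> A - {v, w}. P (f u)})) * (1 + real (card {u \<in> A - {v, w}. Q (f u)})))"
      using assms count[of v "{v, w}" P] count[of w "{v, w}" Q]
      by (intro divide_left_mono mult_mono mult_pos_pos) auto
    then show "indicator {f. f v = t \<and> f w = s} f / (?cP * ?cQ)
                 \<le> indicator {f. f v = t \<and> f w = s} f *
                   (1 / ((1 + real (card {u \<in> A - {v, w}. P (f u)})) * (1 + real (card {u \<in> A - {v, w}. Q (f u)}))))"
      by (simp add: indicator_def)
  qed
  finally show ?thesis .
qed

lemma nn_integral_pinned_inverse_counts:
  assumes A: "finite A" "2 \<le> card A" "v \<in> A" "w \<in> A" and "P t" "Q s" and \<delta>: "0 < \<delta>"
    and \<delta>P: "0 < measure_pmf.prob T {k. P k} \<Longrightarrow> \<delta> \<le> measure_pmf.prob T {k. P k}"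
    and \<delta>Q: "0 < measure_pmf.prob T {k. Q k} \<Longrightarrow> \<delta> \<le> measure_pmf.prob T {k. Q k}"
  shows "(\<integral>\<^sup>+f. ennreal (indicator {f. f v = t \<and> f w = s} f *
             (1 / ((1 + real (card {u \<in> A - {v, w}. P (f u)})) * (1 + real (card {u \<in> A - {v, w}. Q (f u)})))))
           \<partial>Pi_pmf A d (\<lambda>_. T))
         \<le> ennreal (4 / ((real (card A) - 1) * real (card A) * \<delta>\<^sup>2)
                     * measure_pmf.prob (Pi_pmf {v, w} d (\<lambda>_. T)) {f. f v = t \<and> f w = s})"
proof -
  let ?E = "{f. f v = t \<and> f w = s}" and ?R = "A - {v, w}"
  let ?p = "measure_pmf.prob (Pi_pmf {v, w} d (\<lambda>_. T)) ?E"
  let ?\<phi> = "\<lambda>f. 1 / ((1 + real (card {u \<in> ?R. P (f u)})) * (1 + real (card {u \<in> ?R. Q (f u)})))"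
  have split: "(\<integral>\<^sup>+f. ennreal (indicator ?E f * ?\<phi> f) \<partial>Pi_pmf A d (\<lambda>_. T))
                 = ennreal ?p * (\<integral>\<^sup>+g. ennreal (?\<phi> g) \<partial>Pi_pmf ?R d (\<lambda>_. T))"
  proof (simp only: ennreal_mult' ennreal_indicator indicator_pos_le,
         subst nn_integral_Pi_pmf_mult_indep[where D = "{v, w}"])
    fix f g :: "'a \<Rightarrow> 'b"
    assume "\<forall>x\<in>?R. f x = g x"
    then have "{u \<in> ?R. P (f u)} = {u \<in> ?R. P (g u)}" "{u \<in> ?R. Q (f u)} = {u \<in> ?R. Q (g u)}"
      by auto
    then show "ennreal (?\<phi> f) = ennreal (?\<phi> g)"
      by simp
  qed (use A in \<open>auto simp: indicator_def measure_pmf.emeasure_eq_measure\<close>)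
  show ?thesis
  proof (cases "?p = 0")
    case False
    then have "0 < pmf T t" "0 < pmf T s"
      using prob_Pi_pmf_two_coordinates[of "{v, w}" v w d T t s]
      by (auto split: if_splits simp: zero_less_mult_iff)
    moreover have "pmf T t \<le> measure_pmf.prob T {k. P k}" "pmf T s \<le> measure_pmf.prob T {k. Q k}"
      using assms by (auto simp flip: measure_pmf_single intro!: measure_pmf.finite_measure_mono)
    ultimately have "\<delta> \<le> measure_pmf.prob T {k. P k}" "\<delta> \<le> measure_pmf.prob T {k. Q k}"
      using \<delta>P \<delta>Q by auto
    then have "(\<integral>\<^sup>+g. ennreal (?\<phi> g) \<partial>Pi_pmf ?R d (\<lambda>_. T))
                 \<le> ennreal (4 / ((real (card ?R) + 1) * (real (card ?R) + 2) * \<delta>\<^sup>2))"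
      using A \<delta> by (intro nn_integral_inverse_counts) auto
    also have "\<dots> \<le> ennreal (4 / ((real (card A) - 1) * real (card A) * \<delta>\<^sup>2))"
    proof -
      have "card {v, w} \<le> 2"
        by (cases "v = w") auto
      then have "card A \<le> card ?R + 2"
        using A card_Diff_subset[of "{v, w}" A] by auto
      then show ?thesis
        using A \<delta> by (intro ennreal_leI divide_left_mono mult_right_mono mult_mono mult_pos_pos) auto
    qed
    finally show ?thesis
      unfolding split mult.commute[of "4 / _"] ennreal_mult'[OF measure_nonneg] by (rule mult_left_mono) simp
  qed (unfold split, simp)
qed

lemma sum_sum_diagonal:
  fixes a b :: real
  assumes "finite A"
  shows "(\<Sum>v\<in>A. \<Sum>w\<in>A. if v = w then a else b) = real (card A) * (a + (real (card A) - 1) * b)"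
proof -
  have "(\<Sum>w\<in>A. if v = w then a else b) = a + (real (card A) - 1) * b" if "v \<in> A" for v
  proof -
    have "1 \<le> card A"
      using assms that by (auto simp: Suc_le_eq card_gt_0_iff)
    have "(\<Sum>w\<in>A. if v = w then a else b) = (if v = v then a else b) + (\<Sum>w\<in>A - {v}. if v = w then a else b)"
      using assms that by (rule sum.remove)
    also have "(\<Sum>w\<in>A - {v}. if v = w then a else b) = (\<Sum>w\<in>A - {v}. b)"
      by (intro sum.cong) auto
    finally show ?thesis
      using \<open>1 \<le> card A\<close> assms that by (simp add: card_Diff_singleton of_nat_diff)
  qed
  then show ?thesis
    by simp
qed

lemma sum_sum_prob_Pi_pmf_two_coordinates:
  assumes "finite A"
  shows "(\<Sum>v\<in>A. \<Sum>w\<in>A. measure_pmf.prob (Pi_pmf {v, w} d (\<lambda>_. T)) {f. f v = t \<and> f w = s})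
           = real (card A) * ((if t = s then pmf T t else 0) + (real (card A) - 1) * (pmf T t * pmf T s))"
proof -
  have "(\<Sum>v\<in>A. \<Sum>w\<in>A. measure_pmf.prob (Pi_pmf {v, w} d (\<lambda>_. T)) {f. f v = t \<and> f w = s})
          = (\<Sum>v\<in>A. \<Sum>w\<in>A. if v = w then (if t = s then pmf T t else 0) else pmf T t * pmf T s)"
    by (intro sum.cong refl prob_Pi_pmf_two_coordinates) auto
  also have "\<dots> = real (card A) * ((if t = s then pmf T t else 0) + (real (card A) - 1) * (pmf T t * pmf T s))"
    by (rule sum_sum_diagonal[OF assms])
  finally show ?thesis .
qed

lemma nn_integral_type_fraction_product:
  assumes A: "finite A" "2 \<le> card A" and \<delta>: "0 < \<delta>"
    and \<delta>P: "0 < measure_pmf.prob T {k. P k} \<Longrightarrow> \<delta> \<le> measure_pmf.prob T {k. P k}"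
    and \<delta>Q: "0 < measure_pmf.prob T {k. Q k} \<Longrightarrow> \<delta> \<le> measure_pmf.prob T {k. Q k}"
  shows "(\<integral>\<^sup>+f. ennreal (type_fraction A f P t * type_fraction A f Q s) \<partial>Pi_pmf A d (\<lambda>_. T))
           \<le> ennreal (4 / \<delta>\<^sup>2 * (pmf T t * pmf T s + (if t = s then pmf T t / (real (card A) - 1) else 0)))"
proof (cases "P t \<and> Q s")
  case False
  have zero: "type_fraction A f P t * type_fraction A f Q s = 0" for f
  proof -
    have "{v \<in> A. P (f v) \<and> f v = t} = {} \<or> {v \<in> A. Q (f v) \<and> f v = s} = {}"
      using False by auto
    then show ?thesis
      unfolding type_fraction_def by (elim disjE) (simp_all only: card.empty of_nat_0 div_0 mult_zero_left mult_zero_right)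
  qed
  show ?thesis
    unfolding zero by simp
next
  case True
  let ?n = "real (card A)"
  let ?c = "4 / ((?n - 1) * ?n * \<delta>\<^sup>2)"
  let ?h = "\<lambda>v w f. indicator {f. f v = t \<and> f w = s} f *
             (1 / ((1 + real (card {u \<in> A - {v, w}. P (f u)})) * (1 + real (card {u \<in> A - {v, w}. Q (f u)}))))"
  let ?p = "\<lambda>v w. measure_pmf.prob (Pi_pmf {v, w} d (\<lambda>_. T)) {f. f v = t \<and> f w = s}"
  have "?c \<ge> 0"
    using A by simp
  have "(\<integral>\<^sup>+f. ennreal (type_fraction A f P t * type_fraction A f Q s) \<partial>Pi_pmf A d (\<lambda>_. T))
          \<le> (\<integral>\<^sup>+f. (\<Sum>v\<in>A. \<Sum>w\<in>A. ennreal (?h v w f)) \<partial>Pi_pmf A d (\<lambda>_. T))"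
  proof (intro nn_integral_mono)
    fix f
    have "ennreal (type_fraction A f P t * type_fraction A f Q s) \<le> ennreal (\<Sum>v\<in>A. \<Sum>w\<in>A. ?h v w f)"
      using A(1) True by (intro ennreal_leI type_fraction_product_le) auto
    then show "ennreal (type_fraction A f P t * type_fraction A f Q s) \<le> (\<Sum>v\<in>A. \<Sum>w\<in>A. ennreal (?h v w f))"
      by (simp add: sum_nonneg)
  qed
  also have "\<dots> = (\<Sum>v\<in>A. \<Sum>w\<in>A. \<integral>\<^sup>+f. ennreal (?h v w f) \<partial>Pi_pmf A d (\<lambda>_. T))"
    by (subst nn_integral_sum, simp, intro sum.cong refl nn_integral_sum, simp)
  also have "\<dots> \<le> (\<Sum>v\<in>A. \<Sum>w\<in>A. ennreal (?c * ?p v w))"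
    using A True \<delta> \<delta>P \<delta>Q by (intro sum_mono nn_integral_pinned_inverse_counts) auto
  also have "\<dots> = ennreal (?c * (\<Sum>v\<in>A. \<Sum>w\<in>A. ?p v w))"
    using \<open>?c \<ge> 0\<close> by (simp add: sum_distrib_left sum_nonneg)
  also have "(\<Sum>v\<in>A. \<Sum>w\<in>A. ?p v w)
               = ?n * ((if t = s then pmf T t else 0) + (?n - 1) * (pmf T t * pmf T s))"
    by (rule sum_sum_prob_Pi_pmf_two_coordinates[OF A(1)])
  also have "?c * \<dots> = 4 / \<delta>\<^sup>2 * (pmf T t * pmf T s + (if t = s then pmf T t else 0) / (?n - 1))"
  proof -
    have "?n - 1 > 0"
      using A by simp
    then show ?thesis
      using \<delta> by (simp add: field_simps)
  qed
  also have "(if t = s then pmf T t else 0) / (?n - 1) = (if t = s then pmf T t / (?n - 1) else 0)"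
    by simp
  finally show ?thesis .
qed

lemma prob_arc_pmf_types:
  "measure_pmf.prob (arc_pmf n tys I J c) {x. \<exists>v w. x = Some (v, w) \<and> tys v = t \<and> tys w = s}
     = type_fraction {..<n} tys (\<lambda>k. I k (fst c)) t * type_fraction {..<n} tys (\<lambda>k. J k (snd c)) s"
proof -
  define V where "V = {v. v < n \<and> I (tys v) (fst c)}"
  define W where "W = {w. w < n \<and> J (tys w) (snd c)}"
  have fractions: "type_fraction {..<n} tys (\<lambda>k. I k (fst c)) t = card (V \<inter> {v. tys v = t}) / card V"
    "type_fraction {..<n} tys (\<lambda>k. J k (snd c)) s = card (W \<inter> {w. tys w = s}) / card W"
    unfolding type_fraction_def V_def W_def by (simp_all add: Int_def conj_ac)
  show ?thesis
  proof (cases "V = {} \<or> W = {}")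
    case True
    then have "arc_pmf n tys I J c = return_pmf None"
      unfolding arc_pmf_def V_def W_def Let_def by auto
    with True show ?thesis
      unfolding fractions by auto
  next
    case False
    then have "arc_pmf n tys I J c = map_pmf Some (pair_pmf (pmf_of_set V) (pmf_of_set W))"
      unfolding arc_pmf_def V_def W_def Let_def by auto
    then have "measure_pmf.prob (arc_pmf n tys I J c) {x. \<exists>v w. x = Some (v, w) \<and> tys v = t \<and> tys w = s}
                 = measure_pmf.prob (pair_pmf (pmf_of_set V) (pmf_of_set W)) ({v. tys v = t} \<times> {w. tys w = s})"
      by (simp add: vimage_def)
    also have "\<dots> = measure_pmf.prob (pmf_of_set V) {v. tys v = t} * measure_pmf.prob (pmf_of_set W) {w. tys w = s}"
      by (rule measure_pmf_prob_product) auto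
    also have "\<dots> = type_fraction {..<n} tys (\<lambda>k. I k (fst c)) t * type_fraction {..<n} tys (\<lambda>k. J k (snd c)) s"
      using False unfolding fractions by (simp add: measure_pmf_of_set V_def W_def)
    finally show ?thesis .
  qed
qed

lemma nn_integral_Pi_pmf_component:
  assumes "finite K" "a \<in> K"
  shows "(\<integral>\<^sup>+f. g (f a) \<partial>Pi_pmf K d p) = (\<integral>\<^sup>+x. g x \<partial>p a)"
proof -
  have "(\<integral>\<^sup>+f. g (f a) \<partial>Pi_pmf K d p) = (\<integral>\<^sup>+x. g x \<partial>map_pmf (\<lambda>f. f a) (Pi_pmf K d p))"
    by simp
  also have "map_pmf (\<lambda>f. f a) (Pi_pmf K d p) = p a"
    using assms by (simp add: Pi_pmf_component)
  finally show ?thesis .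
qed

lemma emeasure_CCI_arc_event:
  assumes "a < num_arcs n \<mu>"
  shows "emeasure (CCI n \<mu> T C I J) (arc_event a t s)
           = (\<integral>\<^sup>+c. \<integral>\<^sup>+tys. ennreal (type_fraction {..<n} tys (\<lambda>k. I k (fst c)) t
                                        * type_fraction {..<n} tys (\<lambda>k. J k (snd c)) s)
                \<partial>Pi_pmf {..<n} 0 (\<lambda>_. T) \<partial>C)"
proof -
  define K where "K = {..<num_arcs n \<mu>}"
  have K: "finite K" "a \<in> K"
    unfolding K_def using assms by auto
  define S where "S tys = {x. \<exists>v w. x = Some (v, w) \<and> tys v = t \<and> tys w = (s :: nat)}" for tys :: "nat \<Rightarrow> nat"
  have "emeasure (CCI n \<mu> T C I J) (arc_event a t s)
          = (\<integral>\<^sup>+cols. \<integral>\<^sup>+tys. \<integral>\<^sup>+arcs. indicator (S tys) (arcs a)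
               \<partial>Pi_pmf K None (\<lambda>a. arc_pmf n tys I J (cols a)) \<partial>Pi_pmf {..<n} 0 (\<lambda>_. T) \<partial>Pi_pmf K (0, 0) (\<lambda>_. C))"
    unfolding CCI_def K_def
    by (subst bind_commute_pmf) (simp add: arc_event_def S_def indicator_def)
  also have "\<dots> = (\<integral>\<^sup>+cols. \<integral>\<^sup>+tys. ennreal (type_fraction {..<n} tys (\<lambda>k. I k (fst (cols a))) t
                                        * type_fraction {..<n} tys (\<lambda>k. J k (snd (cols a))) s)
                \<partial>Pi_pmf {..<n} 0 (\<lambda>_. T) \<partial>Pi_pmf K (0, 0) (\<lambda>_. C))"
    by (simp add: nn_integral_Pi_pmf_component[OF K] measure_pmf.emeasure_eq_measure prob_arc_pmf_types S_def)
  also have "\<dots> = (\<integral>\<^sup>+c. \<integral>\<^sup>+tys. ennreal (type_fraction {..<n} tys (\<lambda>k. I k (fst c)) t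
                                        * type_fraction {..<n} tys (\<lambda>k. J k (snd c)) s)
                \<partial>Pi_pmf {..<n} 0 (\<lambda>_. T) \<partial>C)"
    by (rule nn_integral_Pi_pmf_component[OF K])
  finally show ?thesis .
qed

lemma suminf_pmf_indicator: "(\<Sum>k. pmf T k * (if P k then 1 else 0)) = measure_pmf.prob T {k. P k}"
proof -
  have "(\<lambda>k. if k \<in> {k. P k} then pmf T k else 0) sums infsetsum (pmf T) {k. P k}"
    by (rule sums_infsetsum_nat) (rule pmf_abs_summable)
  moreover have "(\<lambda>k. if k \<in> {k. P k} then pmf T k else 0) = (\<lambda>k. pmf T k * (if P k then 1 else 0))"
    by auto
  ultimately show ?thesis
    by (simp add: sums_iff measure_pmf_conv_infsetsum)
qed

lemma lam_eq_prob: "lam T I i = measure_pmf.prob T {k. I k i}"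
  unfolding lam_def q_def by (rule suminf_pmf_indicator)

lemma rho_eq_prob: "rho T J j = measure_pmf.prob T {k. J k j}"
  unfolding rho_def q_def by (rule suminf_pmf_indicator)

lemma prob_arc_event_le:
  assumes n: "2 \<le> n" and a: "a < num_arcs n \<mu>" and \<delta>: "0 < \<delta>"
    and lam: "\<And>i. 0 < lam T I i \<Longrightarrow> \<delta> \<le> lam T I i"
    and rho: "\<And>j. 0 < rho T J j \<Longrightarrow> \<delta> \<le> rho T J j"
  shows "measure_pmf.prob (CCI n \<mu> T C I J) (arc_event a t s)
           \<le> 4 / \<delta>\<^sup>2 * (q T t * q T s + (if t = s then q T t / (real n - 1) else 0))"
proof -
  let ?B = "4 / \<delta>\<^sup>2 * (q T t * q T s + (if t = s then q T t / (real n - 1) else 0))"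
  have "emeasure (CCI n \<mu> T C I J) (arc_event a t s)
          = (\<integral>\<^sup>+c. \<integral>\<^sup>+tys. ennreal (type_fraction {..<n} tys (\<lambda>k. I k (fst c)) t
                                        * type_fraction {..<n} tys (\<lambda>k. J k (snd c)) s)
                \<partial>Pi_pmf {..<n} 0 (\<lambda>_. T) \<partial>C)"
    using a by (rule emeasure_CCI_arc_event)
  also have "\<dots> \<le> (\<integral>\<^sup>+c. ennreal ?B \<partial>C)"
  proof (intro nn_integral_mono)
    fix c :: "nat \<times> nat"
    have "(\<integral>\<^sup>+tys. ennreal (type_fraction {..<n} tys (\<lambda>k. I k (fst c)) t
                                  * type_fraction {..<n} tys (\<lambda>k. J k (snd c)) s) \<partial>Pi_pmf {..<n} 0 (\<lambda>_. T))
            \<le> ennreal (4 / \<delta>\<^sup>2 * (pmf T t * pmf T s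
                                  + (if t = s then pmf T t / (real (card {..<n}) - 1) else 0)))"
      using n \<delta> lam rho by (intro nn_integral_type_fraction_product) (auto simp: lam_eq_prob rho_eq_prob)
    then show "(\<integral>\<^sup>+tys. ennreal (type_fraction {..<n} tys (\<lambda>k. I k (fst c)) t
                                  * type_fraction {..<n} tys (\<lambda>k. J k (snd c)) s) \<partial>Pi_pmf {..<n} 0 (\<lambda>_. T))
                 \<le> ennreal ?B"
      unfolding q_def card_lessThan .
  qed
  also have "\<dots> = ennreal ?B"
    by simp
  finally have "ennreal (measure_pmf.prob (CCI n \<mu> T C I J) (arc_event a t s)) \<le> ennreal ?B"
    unfolding measure_pmf.emeasure_eq_measure .
  moreover have "0 \<le> ?B"
    using n by (simp add: q_def)
  ultimately show ?thesis
    by (simp only: ennreal_le_iff)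
qed

lemma inverse_pred_le_ln_div_sqrt:
  assumes "3 \<le> n"
  shows "1 / (real n - 1) \<le> ln (real n) / sqrt (real n)"
proof -
  have "exp 1 \<le> real n"
    using exp_le assms by linarith
  then have "1 \<le> ln (real n)"
    using assms by (subst ln_ge_iff) auto
  moreover have "sqrt (real n) \<le> real n - 1"
  proof (rule real_le_lsqrt)
    have "3 * real n \<le> real n * real n"
      using assms by (intro mult_right_mono) auto
    then show "real n \<le> (real n - 1)\<^sup>2"
      by (simp add: power2_eq_square algebra_simps)
  qed (use assms in auto)
  ultimately show ?thesis
    using assms by (intro frac_le) auto
qed

lemma prob_arc_event_le_sqrt:
  assumes n: "3 \<le> n" and a: "a < num_arcs n \<mu>" and \<delta>: "0 < \<delta>"
    and lam: "\<And>i. 0 < lam T I i \<Longrightarrow> \<delta> \<le> lam T I i"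
    and rho: "\<And>j. 0 < rho T J j \<Longrightarrow> \<delta> \<le> rho T J j"
  shows "measure_pmf.prob (CCI n \<mu> T C I J) (arc_event a t s)
           \<le> 4 / \<delta>\<^sup>2 * sqrt (q T t * q T s) *
              (sqrt (q T t * q T s) + ln (real n) / sqrt (real n) + 1 / real n powr r)"
proof -
  define x where "x = sqrt (q T t * q T s)"
  have x: "0 \<le> x" "x\<^sup>2 = q T t * q T s" "t = s \<Longrightarrow> x = q T t"
    unfolding x_def q_def by auto
  have "0 \<le> x / (real n - 1)" "0 \<le> x * (1 / real n powr r)"
    using n x(1) by auto
  then have "(if t = s then x / (real n - 1) else 0) \<le> x / (real n - 1)"
    by simp
  also have "\<dots> \<le> x * (ln (real n) / sqrt (real n)) + x * (1 / real n powr r)"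
    using mult_left_mono[OF inverse_pred_le_ln_div_sqrt[OF n] x(1)] \<open>0 \<le> x * (1 / real n powr r)\<close> by simp
  finally have "x\<^sup>2 + (if t = s then x / (real n - 1) else 0)
                  \<le> x * (x + ln (real n) / sqrt (real n) + 1 / real n powr r)"
    by (simp add: power2_eq_square distrib_left)
  have "measure_pmf.prob (CCI n \<mu> T C I J) (arc_event a t s)
          \<le> 4 / \<delta>\<^sup>2 * (q T t * q T s + (if t = s then q T t / (real n - 1) else 0))"
    by (rule prob_arc_event_le[OF _ a \<delta> lam rho]) (use n in simp)
  also have "q T t * q T s + (if t = s then q T t / (real n - 1) else 0)
               = x\<^sup>2 + (if t = s then x / (real n - 1) else 0)"
    using x by (cases "t = s") simp_all
  also have "4 / \<delta>\<^sup>2 * \<dots> \<le> 4 / \<delta>\<^sup>2 * (x * (x + ln (real n) / sqrt (real n) + 1 / real n powr r))"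
    by (rule mult_left_mono) (fact, simp)
  finally show ?thesis
    unfolding x_def by (simp only: mult.assoc)
qed

theorem lemma11:
  fixes T :: "nat pmf" and C :: "(nat \<times> nat) pmf"
    and I J :: "nat \<Rightarrow> nat \<Rightarrow> bool" and \<mu> \<epsilon> \<tau> :: real
  assumes mu_pos: "\<mu> > 0"
    and eps_pos: "\<epsilon> > 0"
    and moment: "summable (\<lambda>k. q T k * real k powr (1 + \<epsilon>))"
    and lam_inf: "\<exists>\<delta>>0. \<forall>i. lam T I i > 0 \<longrightarrow> lam T I i \<ge> \<delta>"
    and rho_inf: "\<exists>\<delta>>0. \<forall>j. rho T J j > 0 \<longrightarrow> rho T J j \<ge> \<delta>"
    and tau: "0 < \<tau>" "\<tau> < 1"
  shows "\<exists>Ch>0. \<forall>r>0. \<exists>N. \<forall>n\<ge>N. \<forall>t s a.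
           (\<not> stable T n \<tau> t \<or> \<not> stable T n \<tau> s) \<and> a < num_arcs n \<mu> \<longrightarrow>
           measure_pmf.prob (CCI n \<mu> T C I J) (arc_event a t s)
             \<le> Ch * sqrt (q T t * q T s) *
                (sqrt (q T t * q T s) + ln (real n) / sqrt (real n) + 1 / real n powr r)"
proof -
  obtain \<delta>\<^sub>1 \<delta>\<^sub>2 where "0 < \<delta>\<^sub>1" "\<forall>i. 0 < lam T I i \<longrightarrow> \<delta>\<^sub>1 \<le> lam T I i"
    and "0 < \<delta>\<^sub>2" "\<forall>j. 0 < rho T J j \<longrightarrow> \<delta>\<^sub>2 \<le> rho T J j"
    using lam_inf rho_inf by blast
  then have "0 < min \<delta>\<^sub>1 \<delta>\<^sub>2"
    and "\<And>i. 0 < lam T I i \<Longrightarrow> min \<delta>\<^sub>1 \<delta>\<^sub>2 \<le> lam T I i"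
    and "\<And>j. 0 < rho T J j \<Longrightarrow> min \<delta>\<^sub>1 \<delta>\<^sub>2 \<le> rho T J j"
    by auto
  note bound = prob_arc_event_le_sqrt[OF _ _ this]
  show ?thesis
    using \<open>0 < min \<delta>\<^sub>1 \<delta>\<^sub>2\<close> bound
    by (intro exI[of _ "4 / (min \<delta>\<^sub>1 \<delta>\<^sub>2)\<^sup>2"] conjI allI impI exI[of _ 3]) auto
qed

end
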